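(* Let $G\in\mathcal{G}(\widehat{C}_6,\widehat{C}_7)$ and $xy\in E(G)$. Then $xy$ is a relating edge if and only if there exist an independent set $S_x\subseteq N_2(x)\setminus N(y)$ which dominates $N(x)\cap N_2(y)$, and an independent set $S_y\subseteq N_2(y)\setminus N(x)$ which dominates $N(y)\cap N_2(x)$.
   Context: All graphs are finite, simple and undirected. $\mathcal{G}(\widehat{C}_6,\widehat{C}_7)$ is the family of graphs with no subgraph (not necessarily induced) isomorphic to $C_6$ or $C_7$. $N_i(v)$ is the set of vertices at distance exactly $i$ from $v$, $N(v)=N_1(v)$; a set $S$ dominates $T$ if every vertex of $T$ is in $S$ or adjacent to a vertex of $S$. An edge $xy$ is relating if there exists an independent set $S$, containing neither $x$ nor $y$, such that both $S\cup\{x\}$ and $S\cup\{y\}$ are maximal independent sets of $G$. *)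

theory Defs
  imports Main
begin

definition simple_graph :: "'a set \<Rightarrow> ('a \<Rightarrow> 'a \<Rightarrow> bool) \<Rightarrow> bool" where
  "simple_graph V E \<longleftrightarrow> finite V \<and> (\<forall>u v. E u v \<longrightarrow> u \<in> V \<and> v \<in> V)
     \<and> (\<forall>u v. E u v \<longrightarrow> E v u) \<and> (\<forall>u. \<not> E u u)"

definition has_cycle :: "'a set \<Rightarrow> ('a \<Rightarrow> 'a \<Rightarrow> bool) \<Rightarrow> nat \<Rightarrow> bool" where
  "has_cycle V E k \<longleftrightarrow> (\<exists>f :: nat \<Rightarrow> 'a. inj_on f {..<k} \<and> f ` {..<k} \<subseteq> V
     \<and> (\<forall>i<k. E (f i) (f (Suc i mod k))))"

fun walk_len :: "('a \<Rightarrow> 'a \<Rightarrow> bool) \<Rightarrow> nat \<Rightarrow> 'a \<Rightarrow> 'a \<Rightarrow> bool" where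
  "walk_len E 0 u v = (u = v)"
| "walk_len E (Suc n) u v = (\<exists>w. E u w \<and> walk_len E n w v)"

definition nbhd_dist :: "'a set \<Rightarrow> ('a \<Rightarrow> 'a \<Rightarrow> bool) \<Rightarrow> nat \<Rightarrow> 'a \<Rightarrow> 'a set" where
  "nbhd_dist V E i v = {u \<in> V. walk_len E i v u \<and> (\<forall>j<i. \<not> walk_len E j v u)}"

definition independent :: "'a set \<Rightarrow> ('a \<Rightarrow> 'a \<Rightarrow> bool) \<Rightarrow> 'a set \<Rightarrow> bool" where
  "independent V E S \<longleftrightarrow> S \<subseteq> V \<and> (\<forall>u\<in>S. \<forall>v\<in>S. \<not> E u v)"

definition maximal_independent :: "'a set \<Rightarrow> ('a \<Rightarrow> 'a \<Rightarrow> bool) \<Rightarrow> 'a set \<Rightarrow> bool" where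
  "maximal_independent V E S \<longleftrightarrow> independent V E S
     \<and> (\<forall>v\<in>V - S. \<not> independent V E (insert v S))"

definition dominates :: "('a \<Rightarrow> 'a \<Rightarrow> bool) \<Rightarrow> 'a set \<Rightarrow> 'a set \<Rightarrow> bool" where
  "dominates E S T \<longleftrightarrow> (\<forall>t\<in>T. t \<in> S \<or> (\<exists>s\<in>S. E s t))"

definition relating :: "'a set \<Rightarrow> ('a \<Rightarrow> 'a \<Rightarrow> bool) \<Rightarrow> 'a \<Rightarrow> 'a \<Rightarrow> bool" where
  "relating V E x y \<longleftrightarrow> E x y \<and> (\<exists>S. independent V E S \<and> x \<notin> S \<and> y \<notin> S
     \<and> maximal_independent V E (insert x S) \<and> maximal_independent V E (insert y S))"

end

theory Submission
  imports Defs
begin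

text \<open>
  If S + x and S + y are both maximal independent, then S \<inter> N_2(x) dominates N(x) \<inter> N_2(y):
  such a vertex is neither in S + y nor adjacent to y, so maximality of S + y gives it a
  neighbour in S, and that neighbour lies in N_2(x) because S + x is independent.

  Conversely, shrink S_x and S_y to the vertices S_x' and S_y' that actually dominate
  something in N(x) \<inter> N_2(y), resp. N(y) \<inter> N_2(x). An edge s t with s \<in> S_x' and
  t \<in> S_y' would close a 6-cycle x a s t b y, so S_x' \<union> S_y' is independent. Extending it
  greedily to an independent set S dominating everything outside N[x] \<union> N[y] makes both
  S + x and S + y maximal independent.
\<close>

lemma simple_graph_sym: "simple_graph V E \<Longrightarrow> E u v \<Longrightarrow> E v u"
  unfolding simple_graph_def by blast

lemma simple_graph_irrefl: "simple_graph V E \<Longrightarrow> \<not> E u u"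
  unfolding simple_graph_def by blast

lemma simple_graph_edge_in_vertices: "simple_graph V E \<Longrightarrow> E u v \<Longrightarrow> u \<in> V \<and> v \<in> V"
  unfolding simple_graph_def by blast

lemma nbhd_dist_1: "simple_graph V E \<Longrightarrow> nbhd_dist V E 1 v = {u \<in> V. E v u}"
  unfolding nbhd_dist_def simple_graph_def by auto

lemma nbhd_dist_2:
  "simple_graph V E \<Longrightarrow>
     nbhd_dist V E 2 v = {u \<in> V. u \<noteq> v \<and> \<not> E v u \<and> (\<exists>w. E v w \<and> E w u)}"
  unfolding nbhd_dist_def simple_graph_def by (auto simp: numeral_2_eq_2 less_Suc_eq)

lemma has_cycle_of_list:
  assumes "distinct xs" "set xs \<subseteq> V" "xs \<noteq> []"
    and "successively E xs" "E (last xs) (hd xs)"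
  shows "has_cycle V E (length xs)"
proof -
  have "E (xs ! i) (xs ! (Suc i mod length xs))" if "i < length xs" for i
  proof (cases "Suc i < length xs")
    case True
    then show ?thesis using successively_nth[OF assms(4)] by simp
  next
    case False
    then have "Suc i = length xs" using that by simp
    then have "Suc i mod length xs = 0" "i = length xs - 1" by simp_all
    then show ?thesis using assms(3,5) by (simp add: last_conv_nth hd_conv_nth)
  qed
  moreover have "inj_on ((!) xs) {..<length xs}"
    using assms(1) by (simp add: inj_on_def nth_eq_iff_index_eq)
  moreover have "(!) xs ` {..<length xs} \<subseteq> V"
    using assms(2) by (auto dest: nth_mem)
  ultimately show ?thesis unfolding has_cycle_def by blast
qed

lemma maximal_independent_iff_dominating:
  assumes "simple_graph V E"
  shows "maximal_independent V E T \<longleftrightarrow>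
           independent V E T \<and> (\<forall>v \<in> V - T. \<exists>u \<in> T. E u v)"
  using simple_graph_sym[OF assms] simple_graph_irrefl[OF assms]
  unfolding maximal_independent_def independent_def by blast

lemma independent_extends_to_dominating:
  assumes "simple_graph V E" "W \<subseteq> V" "S\<^sub>0 \<subseteq> W" "independent V E S\<^sub>0"
  obtains S where "S\<^sub>0 \<subseteq> S" "S \<subseteq> W" "independent V E S" "\<forall>v \<in> W - S. \<exists>u \<in> S. E u v"
proof -
  let ?C = "{T. S\<^sub>0 \<subseteq> T \<and> T \<subseteq> W \<and> independent V E T}"
  have "finite W" using assms(1,2) unfolding simple_graph_def by (blast intro: finite_subset)
  then have "finite ?C" by (rule rev_finite_subset[OF finite_Pow_iff[THEN iffD2]]) blast
  moreover have "S\<^sub>0 \<in> ?C" using assms(3,4) by blast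
  ultimately obtain S where S: "S \<in> ?C" and max: "\<forall>T \<in> ?C. S \<subseteq> T \<longrightarrow> S = T"
    by (auto dest: finite_has_maximal2)
  have "\<exists>u \<in> S. E u v" if v: "v \<in> W - S" for v
  proof -
    have "insert v S \<notin> ?C" using max v by blast
    then have "\<not> independent V E (insert v S)" using S v by blast
    then show ?thesis
      using S v assms(2) simple_graph_sym[OF assms(1)] simple_graph_irrefl[OF assms(1)]
      unfolding independent_def by blast
  qed
  with S that show thesis by blast
qed

definition far_from_edge :: "'a set \<Rightarrow> ('a \<Rightarrow> 'a \<Rightarrow> bool) \<Rightarrow> 'a \<Rightarrow> 'a \<Rightarrow> 'a set" where
  "far_from_edge V E x y = {v \<in> V. v \<noteq> x \<and> v \<noteq> y \<and> \<not> E x v \<and> \<not> E y v}"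

lemma far_from_edge_commute: "far_from_edge V E x y = far_from_edge V E y x"
  unfolding far_from_edge_def by blast

lemma far_from_edge_of_second_nbhd:
  assumes G: "simple_graph V E" and "E x y" and "s \<in> nbhd_dist V E 2 x - nbhd_dist V E 1 y"
  shows "s \<in> far_from_edge V E x y"
  using assms simple_graph_sym[OF G]
  unfolding far_from_edge_def nbhd_dist_1[OF G] nbhd_dist_2[OF G] by blast

lemma dominating_set_of_maximal_independent_pair:
  assumes G: "simple_graph V E" and xy: "E x y" and "y \<notin> S"
    and ix: "independent V E (insert x S)" and my: "maximal_independent V E (insert y S)"
  shows "\<exists>Sx. independent V E Sx \<and> Sx \<subseteq> nbhd_dist V E 2 x - nbhd_dist V E 1 y
           \<and> dominates E Sx (nbhd_dist V E 1 x \<inter> nbhd_dist V E 2 y)"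
proof (intro exI conjI)
  let ?Sx = "S \<inter> nbhd_dist V E 2 x"
  have iy: "independent V E (insert y S)"
    and dom: "\<forall>v \<in> V - insert y S. \<exists>u \<in> insert y S. E u v"
    using my maximal_independent_iff_dominating[OF G] by blast+
  show "independent V E ?Sx" using ix unfolding independent_def by blast
  show "?Sx \<subseteq> nbhd_dist V E 2 x - nbhd_dist V E 1 y"
    using iy unfolding nbhd_dist_1[OF G] independent_def by blast
  show "dominates E ?Sx (nbhd_dist V E 1 x \<inter> nbhd_dist V E 2 y)"
    unfolding dominates_def
  proof
    fix t assume "t \<in> nbhd_dist V E 1 x \<inter> nbhd_dist V E 2 y"
    then have t: "t \<in> V" "E x t" "t \<noteq> y" "\<not> E y t"
      unfolding nbhd_dist_1[OF G] nbhd_dist_2[OF G] by auto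
    have "t \<notin> S" using ix t(2) unfolding independent_def by blast
    then obtain s where s: "s \<in> S" "E s t" using dom t by blast
    have "x \<notin> S" using iy xy unfolding independent_def by blast
    moreover have "\<not> E x s" using ix s(1) unfolding independent_def by blast
    ultimately have "s \<in> nbhd_dist V E 2 x"
      using s t(2) simple_graph_sym[OF G] simple_graph_edge_in_vertices[OF G]
      unfolding nbhd_dist_2[OF G] by blast
    with s show "t \<in> ?Sx \<or> (\<exists>s \<in> ?Sx. E s t)" by blast
  qed
qed

lemma maximal_independent_insert_endpoint:
  assumes G: "simple_graph V E" and xy: "E x y"
    and iS: "independent V E S" and far: "S \<subseteq> far_from_edge V E x y"
    and dom_far: "\<forall>v \<in> far_from_edge V E x y - S. \<exists>u \<in> S. E u v"
    and dom_y: "\<forall>v \<in> nbhd_dist V E 1 y \<inter> nbhd_dist V E 2 x. \<exists>u \<in> S. E u v"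
  shows "maximal_independent V E (insert x S)"
proof -
  have "\<not> E x s \<and> \<not> E s x" if "s \<in> S" for s
    using that far simple_graph_sym[OF G] unfolding far_from_edge_def by blast
  then have "independent V E (insert x S)"
    using iS simple_graph_edge_in_vertices[OF G xy] simple_graph_irrefl[OF G]
    unfolding independent_def by auto
  moreover have "\<exists>u \<in> insert x S. E u v" if v: "v \<in> V - insert x S" for v
  proof (cases "E x v \<or> v = y")
    case True
    with xy show ?thesis by blast
  next
    case False
    then have "v \<in> far_from_edge V E x y - S \<or> v \<in> nbhd_dist V E 1 y \<inter> nbhd_dist V E 2 x"
      using v xy unfolding far_from_edge_def nbhd_dist_1[OF G] nbhd_dist_2[OF G] by blast
    with v dom_far dom_y show ?thesis by blast
  qed
  ultimately show ?thesis using maximal_independent_iff_dominating[OF G] by blast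
qed

lemma no_edge_between_dominators:
  assumes G: "simple_graph V E" and "\<not> has_cycle V E 6" and xy: "E x y"
    and a: "a \<in> nbhd_dist V E 1 x \<inter> nbhd_dist V E 2 y" "E s a"
    and s: "s \<in> nbhd_dist V E 2 x - nbhd_dist V E 1 y"
    and b: "b \<in> nbhd_dist V E 1 y \<inter> nbhd_dist V E 2 x" "E t b"
    and t: "t \<in> nbhd_dist V E 2 y - nbhd_dist V E 1 x"
  shows "\<not> E s t"
proof
  assume st: "E s t"
  let ?cycle = "[x, a, s, t, b, y]"
  have "distinct ?cycle" "set ?cycle \<subseteq> V"
    using a b s t st simple_graph_edge_in_vertices[OF G xy]
      simple_graph_irrefl[OF G] simple_graph_sym[OF G]
    unfolding nbhd_dist_1[OF G] nbhd_dist_2[OF G] by auto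
  moreover have "successively E ?cycle" "E (last ?cycle) (hd ?cycle)"
    using a b s t st xy simple_graph_sym[OF G] unfolding nbhd_dist_1[OF G] by auto
  ultimately have "has_cycle V E (length ?cycle)" by (intro has_cycle_of_list) auto
  moreover have "length ?cycle = 6" by simp
  ultimately show False using assms(2) by metis
qed

lemma dominates_by_neighbour:
  assumes G: "simple_graph V E" and "Sx \<subseteq> nbhd_dist V E 2 x"
    and "dominates E Sx (nbhd_dist V E 1 x \<inter> nbhd_dist V E 2 y)"
    and v: "v \<in> nbhd_dist V E 1 x \<inter> nbhd_dist V E 2 y"
  shows "\<exists>s \<in> Sx. E s v"
proof -
  have "v \<notin> Sx" using assms(2) v unfolding nbhd_dist_1[OF G] nbhd_dist_2[OF G] by blast
  then show ?thesis using assms(3) v unfolding dominates_def by blast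
qed

lemma relating_of_dominating_sets:
  assumes G: "simple_graph V E" and C6: "\<not> has_cycle V E 6" and xy: "E x y"
    and Sx: "independent V E Sx" "Sx \<subseteq> nbhd_dist V E 2 x - nbhd_dist V E 1 y"
      "dominates E Sx (nbhd_dist V E 1 x \<inter> nbhd_dist V E 2 y)"
    and Sy: "independent V E Sy" "Sy \<subseteq> nbhd_dist V E 2 y - nbhd_dist V E 1 x"
      "dominates E Sy (nbhd_dist V E 1 y \<inter> nbhd_dist V E 2 x)"
  shows "relating V E x y"
proof -
  have yx: "E y x" using simple_graph_sym[OF G xy] .
  define Sx' where "Sx' = {s \<in> Sx. \<exists>a \<in> nbhd_dist V E 1 x \<inter> nbhd_dist V E 2 y. E s a}"
  define Sy' where "Sy' = {t \<in> Sy. \<exists>b \<in> nbhd_dist V E 1 y \<inter> nbhd_dist V E 2 x. E t b}"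
  have far: "Sx' \<union> Sy' \<subseteq> far_from_edge V E x y"
    using Sx(2) Sy(2) far_from_edge_of_second_nbhd[OF G xy] far_from_edge_of_second_nbhd[OF G yx]
    unfolding Sx'_def Sy'_def far_from_edge_commute[of V E y x] by blast
  have "\<not> E s t" if st: "s \<in> Sx'" "t \<in> Sy'" for s t
  proof -
    obtain a b where "a \<in> nbhd_dist V E 1 x \<inter> nbhd_dist V E 2 y" "E s a"
      "b \<in> nbhd_dist V E 1 y \<inter> nbhd_dist V E 2 x" "E t b"
      using st unfolding Sx'_def Sy'_def by blast
    moreover have "s \<in> nbhd_dist V E 2 x - nbhd_dist V E 1 y" "t \<in> nbhd_dist V E 2 y - nbhd_dist V E 1 x"
      using st Sx(2) Sy(2) unfolding Sx'_def Sy'_def by blast+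
    ultimately show ?thesis using no_edge_between_dominators[OF G C6 xy] by blast
  qed
  then have "independent V E (Sx' \<union> Sy')"
    using Sx(1) Sy(1) simple_graph_sym[OF G] unfolding Sx'_def Sy'_def independent_def by blast
  then obtain S where S: "Sx' \<union> Sy' \<subseteq> S" "S \<subseteq> far_from_edge V E x y" "independent V E S"
    and dom_far: "\<forall>v \<in> far_from_edge V E x y - S. \<exists>u \<in> S. E u v"
    using independent_extends_to_dominating[OF G _ far] unfolding far_from_edge_def by blast
  have "\<exists>u \<in> S. E u v" if "v \<in> nbhd_dist V E 1 x \<inter> nbhd_dist V E 2 y" for v
    using that dominates_by_neighbour[OF G _ Sx(3) that] Sx(2) S(1) unfolding Sx'_def by blast
  then have "maximal_independent V E (insert y S)"
    using maximal_independent_insert_endpoint[OF G yx S(3)] S(2) dom_far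
    by (simp add: far_from_edge_commute)
  moreover have "\<exists>u \<in> S. E u v" if "v \<in> nbhd_dist V E 1 y \<inter> nbhd_dist V E 2 x" for v
    using that dominates_by_neighbour[OF G _ Sy(3) that] Sy(2) S(1) unfolding Sy'_def by blast
  then have "maximal_independent V E (insert x S)"
    using maximal_independent_insert_endpoint[OF G xy S(3,2) dom_far] by blast
  moreover have "x \<notin> S" "y \<notin> S" using S(2) unfolding far_from_edge_def by blast+
  ultimately show ?thesis unfolding relating_def using xy S(3) by blast
qed

theorem lemma3p1:
  fixes V :: "'a set" and E :: "'a \<Rightarrow> 'a \<Rightarrow> bool" and x y :: 'a
  assumes "simple_graph V E"
    and "\<not> has_cycle V E 6" and "\<not> has_cycle V E 7"
    and "E x y"
  shows "relating V E x y \<longleftrightarrow>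
    ((\<exists>Sx. independent V E Sx \<and> Sx \<subseteq> nbhd_dist V E 2 x - nbhd_dist V E 1 y
           \<and> dominates E Sx (nbhd_dist V E 1 x \<inter> nbhd_dist V E 2 y))
     \<and> (\<exists>Sy. independent V E Sy \<and> Sy \<subseteq> nbhd_dist V E 2 y - nbhd_dist V E 1 x
           \<and> dominates E Sy (nbhd_dist V E 1 y \<inter> nbhd_dist V E 2 x)))"
  (is "_ \<longleftrightarrow> ?Sx \<and> ?Sy")
proof
  assume "relating V E x y"
  then obtain S where "x \<notin> S" "y \<notin> S"
    and mx: "maximal_independent V E (insert x S)" and my: "maximal_independent V E (insert y S)"
    unfolding relating_def by blast
  moreover have "independent V E (insert x S)" "independent V E (insert y S)"
    using mx my unfolding maximal_independent_def by blast+
  ultimately show "?Sx \<and> ?Sy"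
    using dominating_set_of_maximal_independent_pair[OF assms(1,4)]
      dominating_set_of_maximal_independent_pair[OF assms(1) simple_graph_sym[OF assms(1,4)]]
    by simp
next
  assume "?Sx \<and> ?Sy"
  then show "relating V E x y"
    using relating_of_dominating_sets[OF assms(1,2,4)] by blast
qed

end
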